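(* Let $n>1$ be an integer and $\nu_n(x)=\sum_{d\mid n}\mu(d)\{x/d\}$. Then $$\sum_{a\in U_n}\nu_n(a)\,a=-\frac{n\phi(n)}{4}+n\sum_{d_1\mid n}\sum_{d_2\mid n}\mu(d_1)\mu(d_2)\,s\!\left(\frac{n}{d_1},\frac{n}{d_2}\right).$$
   Context: $U_n$ is the set of positive integers less than $n$ and coprime with $n$; $\{y\}$ is the fractional part; $\mu$ is the Möbius function, $\phi$ Euler's totient function. For positive integers $b,a$ (no coprimality assumed), $s(b,a)=\sum_{k=1}^{a}\left(\left(\frac{kb}{a}\right)\right)\left(\left(\frac{k}{a}\right)\right)$, where $((x))=\{x\}-\tfrac12$ if $x\notin\mathbb{Z}$ and $((x))=0$ if $x\in\mathbb{Z}$. *)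

theory Defs
  imports "HOL-Number_Theory.Number_Theory" "HOL-Computational_Algebra.Squarefree"
begin

definition moebius_mu :: "nat \<Rightarrow> int" where
  "moebius_mu d = (if squarefree d then (-1) ^ card (prime_factors d) else 0)"

definition sawtooth :: "real \<Rightarrow> real" where
  "sawtooth x = (if x \<in> \<int> then 0 else frac x - 1/2)"

text \<open>Dedekind sum s(b,a), no coprimality assumed.\<close>
definition dedekind_sum :: "nat \<Rightarrow> nat \<Rightarrow> real" where
  "dedekind_sum b a = (\<Sum>k=1..a. sawtooth (real (k*b) / real a) * sawtooth (real k / real a))"

definition U :: "nat \<Rightarrow> nat set" where
  "U n = {a. 0 < a \<and> a < n \<and> coprime a n}"

definition nu :: "nat \<Rightarrow> real \<Rightarrow> real" where
  "nu n x = (\<Sum>d | d dvd n. real_of_int (moebius_mu d) * frac (x / real d))"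

end

theory Submission
  imports Defs
begin

(* Writing s(n/d1, n/d2) as the sum of ((j/d1)) ((j/n)) over the multiples j of d2 in [1, n],
   the double Moebius sum becomes a sum over j in which the d2-sum of mu(d2) over d2 | gcd(j, n)
   is the indicator of gcd(j, n) = 1, while for such j the d1-sum of mu(d1) ((j/d1)) equals
   nu_n(j) + 1/2, because ((x)) = {x} - 1/2 away from the integers and only d1 = 1 divides j.
   What remains are the sums of j and of nu_n(j) over U_n, both evaluated with the reflection
   j -> n - j, under which nu_n(j) becomes -1 - nu_n(j). *)

lemma sum_Pow_minus_one_power_card:
  assumes "finite P" "P \<noteq> {}"
  shows "(\<Sum>S\<in>Pow P. (-1) ^ card S) = (0 :: 'a :: comm_ring_1)"
proof -
  have "card P > 0" using assms by (simp add: card_gt_0_iff)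
  then show ?thesis
    using prod_diff_conv_sum[OF assms(1), of "\<lambda>_. 1 :: 'a" "\<lambda>_. 1"] by (simp add: power_0_left)
qed

lemma of_nat_div_of_nat_in_Ints_iff:
  "(real j / real d \<in> \<int>) \<longleftrightarrow> d = 0 \<or> d dvd j"
  using of_int_div_of_int_in_Ints_iff[of "int j" "int d", where 'a=real] by simp

lemma squarefree_prod_prime_factors:
  fixes d :: nat
  assumes "squarefree d"
  shows "\<Prod>(prime_factors d) = d"
proof -
  have "d \<noteq> 0" using assms by (auto intro: Nat.gr0I)
  have "\<Prod>(prime_factors d) = (\<Prod>p\<in>prime_factors d. p ^ multiplicity p d)"
    using assms \<open>d \<noteq> 0\<close> by (intro prod.cong) (auto simp: squarefree_factorial_semiring')
  also have "\<dots> = d" using prod_prime_factors[of d] \<open>d \<noteq> 0\<close> by simp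
  finally show ?thesis .
qed

lemma prime_factors_Prod_primes:
  fixes S :: "nat set"
  assumes "finite S" "\<And>p. p \<in> S \<Longrightarrow> prime p"
  shows "prime_factors (\<Prod>S) = S"
proof -
  have "0 \<notin> S" using assms(2) not_prime_0 by blast
  then have "prime_factors (\<Prod>S) = (\<Union>p\<in>S. prime_factors p)"
    using prime_factors_prod[OF assms(1), of id] by simp
  also have "\<dots> = S" using assms(2) by (simp add: prime_prime_factors)
  finally show ?thesis .
qed

lemma squarefree_Prod_primes:
  fixes S :: "nat set"
  assumes "\<And>p. p \<in> S \<Longrightarrow> prime p"
  shows "squarefree (\<Prod>S)"
  using assms by (intro squarefree_prod_coprime) (auto simp: primes_coprime squarefree_prime)

lemma bij_betw_prime_factors_squarefree_divisors:
  fixes m :: nat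
  assumes "m > 0"
  shows "bij_betw prime_factors {d. d dvd m \<and> squarefree d} (Pow (prime_factors m))"
proof (rule bij_betw_byWitness[where f' = Prod])
  show "\<forall>d\<in>{d. d dvd m \<and> squarefree d}. \<Prod>(prime_factors d) = d"
    by (simp add: squarefree_prod_prime_factors)
  show "\<forall>S\<in>Pow (prime_factors m). prime_factors (\<Prod>S) = S"
    by (auto intro!: prime_factors_Prod_primes intro: finite_subset)
  show "prime_factors ` {d. d dvd m \<and> squarefree d} \<subseteq> Pow (prime_factors m)"
    using assms dvd_prime_factors[of m] by auto
  show "Prod ` Pow (prime_factors m) \<subseteq> {d. d dvd m \<and> squarefree d}"
  proof safe
    fix S assume S: "S \<subseteq> prime_factors m"
    have "\<Prod>S dvd \<Prod>(prime_factors m)" using S by (intro prod_dvd_prod_subset) auto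
    also have "\<dots> dvd (\<Prod>p\<in>prime_factors m. p ^ multiplicity p m)"
      by (intro prod_dvd_prod) (simp add: prime_factors_multiplicity)
    also have "\<dots> = m" using prod_prime_factors[of m] assms by simp
    finally show "\<Prod>S dvd m" .
    show "squarefree (\<Prod>S)" using S by (intro squarefree_Prod_primes) auto
  qed
qed

lemma sum_moebius_mu_divisors:
  assumes "m > 0"
  shows "(\<Sum>d | d dvd m. of_int (moebius_mu d)) = (if m = 1 then 1 else (0 :: 'a :: comm_ring_1))"
proof -
  have "(\<Sum>d | d dvd m. of_int (moebius_mu d)) =
      (\<Sum>d | d dvd m \<and> squarefree d. of_int (moebius_mu d) :: 'a)"
    using assms by (intro sum.mono_neutral_right) (auto simp: moebius_mu_def)
  also have "\<dots> = (\<Sum>d | d dvd m \<and> squarefree d. (-1) ^ card (prime_factors d))"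
    by (intro sum.cong) (auto simp: moebius_mu_def)
  also have "\<dots> = (\<Sum>S\<in>Pow (prime_factors m). (-1) ^ card S)"
    using bij_betw_prime_factors_squarefree_divisors[OF assms]
    by (rule sum.reindex_bij_betw)
  also have "\<dots> = (if m = 1 then 1 else 0)"
  proof (cases "m = 1")
    case False
    then have "prime_factors m \<noteq> {}" using assms by (auto simp: prime_factorization_empty_iff)
    from sum_Pow_minus_one_power_card[OF _ this] False show ?thesis by simp
  qed simp
  finally show ?thesis .
qed

lemma sum_moebius_mu_dvd_indicator:
  assumes "n > 0"
  shows "(\<Sum>d | d dvd n. if d dvd j then of_int (moebius_mu d) else 0) =
    (if coprime j n then 1 else (0 :: 'a :: comm_ring_1))"
proof -
  have "(\<Sum>d | d dvd n. if d dvd j then of_int (moebius_mu d) else 0) =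
      (\<Sum>d | d dvd gcd j n. of_int (moebius_mu d) :: 'a)"
    using assms by (subst sum.inter_filter[symmetric]) (auto intro!: sum.cong)
  also have "\<dots> = (if gcd j n = 1 then 1 else 0)"
    by (rule sum_moebius_mu_divisors) (use assms in simp)
  finally show ?thesis by (simp only: coprime_iff_gcd_eq_1)
qed

lemma sawtooth_eq_frac: "sawtooth x = frac x - 1/2 + (if x \<in> \<int> then 1/2 else 0)"
  by (simp add: sawtooth_def)

lemma sum_moebius_sawtooth:
  assumes "n > 0"
  shows "(\<Sum>d | d dvd n. real_of_int (moebius_mu d) * sawtooth (real j / real d)) =
    nu n (real j) - (if n = 1 then 1/2 else 0) + (if coprime j n then 1/2 else 0)"
proof -
  let ?M = "\<lambda>d. real_of_int (moebius_mu d)"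
  have "(\<Sum>d | d dvd n. ?M d * sawtooth (real j / real d)) =
      (\<Sum>d | d dvd n. ?M d * frac (real j / real d) - ?M d / 2 + (if d dvd j then ?M d else 0) / 2)"
    using assms
    by (intro sum.cong) (auto simp: sawtooth_eq_frac of_nat_div_of_nat_in_Ints_iff algebra_simps)
  also have "\<dots> = nu n (real j) - (\<Sum>d | d dvd n. ?M d) / 2
      + (\<Sum>d | d dvd n. if d dvd j then ?M d else 0) / 2"
    by (simp add: sum.distrib sum_subtractf sum_divide_distrib nu_def)
  also have "\<dots> = nu n (real j) - (if n = 1 then 1/2 else 0) + (if coprime j n then 1/2 else 0)"
    using sum_moebius_mu_divisors[OF assms, where 'a=real]
      sum_moebius_mu_dvd_indicator[OF assms, of j, where 'a=real] by simp
  finally show ?thesis .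
qed

lemma nu_reflect:
  assumes "n > 0" "j \<le> n"
  shows "nu n (real (n - j)) =
    (if n = 1 then 1 else 0) - (if coprime j n then 1 else 0) - nu n (real j)"
proof -
  let ?M = "\<lambda>d. real_of_int (moebius_mu d)"
  have frac_reflect:
    "frac (real (n - j) / real d) = 1 - frac (real j / real d) - (if d dvd j then 1 else 0)"
    if "d dvd n" for d
  proof -
    have "real (n - j) / real d = of_int (int (n div d)) + - (real j / real d)"
      using that assms by (auto simp: real_of_nat_div diff_divide_distrib)
    then have "frac (real (n - j) / real d) = frac (- (real j / real d))"
      by (simp only: frac_add_of_int_left)
    then show ?thesis
      using that assms by (auto simp: frac_neg of_nat_div_of_nat_in_Ints_iff)
  qed
  have "nu n (real (n - j)) =
      (\<Sum>d | d dvd n. ?M d - ?M d * frac (real j / real d) - (if d dvd j then ?M d else 0))"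
    unfolding nu_def by (intro sum.cong) (auto simp: frac_reflect algebra_simps)
  also have "\<dots> = (\<Sum>d | d dvd n. ?M d) - nu n (real j)
      - (\<Sum>d | d dvd n. if d dvd j then ?M d else 0)"
    by (simp add: sum_subtractf nu_def)
  also have "\<dots> = (if n = 1 then 1 else 0) - (if coprime j n then 1 else 0) - nu n (real j)"
    using sum_moebius_mu_divisors[OF assms(1), where 'a=real]
      sum_moebius_mu_dvd_indicator[OF assms(1), of j, where 'a=real] by simp
  finally show ?thesis .
qed

lemma dedekind_sum_divisors_eq_sum_multiples:
  assumes "n > 0" "d1 dvd n" "d2 dvd n"
  shows "dedekind_sum (n div d1) (n div d2) =
    (\<Sum>j=1..n. if d2 dvd j then sawtooth (real j / real d1) * sawtooth (real j / real n) else 0)"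
proof -
  have d: "d1 > 0" "d2 > 0" using assms by (auto intro: Nat.gr0I)
  let ?g = "\<lambda>j. sawtooth (real j / real d1) * sawtooth (real j / real n)"
  have "dedekind_sum (n div d1) (n div d2) = (\<Sum>k=1..n div d2. ?g (k * d2))"
    unfolding dedekind_sum_def using assms d
    by (intro sum.cong) (auto simp: real_of_nat_div field_simps)
  also have "\<dots> = (\<Sum>j | j \<in> {1..n} \<and> d2 dvd j. ?g j)"
  proof (rule sum.reindex_bij_witness[of _ "\<lambda>j. j div d2" "\<lambda>k. k * d2"])
    fix k assume "k \<in> {1..n div d2}"
    then have "k * d2 \<le> n div d2 * d2" "1 \<le> k" by auto
    then show "k * d2 \<in> {j. j \<in> {1..n} \<and> d2 dvd j}"
      using assms d by (auto intro: order_trans)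
  next
    fix j assume "j \<in> {j. j \<in> {1..n} \<and> d2 dvd j}"
    then show "j div d2 \<in> {1..n div d2}" using d by (auto intro: div_le_mono)
  qed (use d in auto)
  also have "\<dots> = (\<Sum>j=1..n. if d2 dvd j then ?g j else 0)"
    by (rule sum.inter_filter) simp
  finally show ?thesis .
qed

lemma U_eq_totatives: "n > 1 \<Longrightarrow> U n = totatives n"
  by (auto simp: U_def totatives_def le_less)

lemma card_U_eq_totient: "n > 1 \<Longrightarrow> card (U n) = totient n"
  by (simp add: U_eq_totatives totient_def)

lemma diff_in_U:
  assumes "j \<in> U n"
  shows "n - j \<in> U n"
proof -
  have "gcd (n - j) n = 1" using assms by (simp add: U_def gcd_diff2_nat)
  then have "coprime (n - j) n" by (rule gcd_eq_1_imp_coprime)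
  with assms show ?thesis by (auto simp: U_def)
qed

lemma sum_U_reflect: "(\<Sum>j\<in>U n. g j) = (\<Sum>j\<in>U n. g (n - j))"
  by (rule sum.reindex_bij_witness[of _ "\<lambda>j. n - j" "\<lambda>j. n - j"])
    (auto simp: diff_in_U, auto simp: U_def)

lemma sum_U_of_nat: "(\<Sum>j\<in>U n. real j) = real n * real (card (U n)) / 2"
proof -
  have "2 * (\<Sum>j\<in>U n. real j) = (\<Sum>j\<in>U n. real j + real (n - j))"
    using sum_U_reflect[of real n] by (simp add: sum.distrib)
  also have "\<dots> = (\<Sum>j\<in>U n. real n)"
    by (intro sum.cong) (auto simp: U_def)
  finally show ?thesis by (simp add: algebra_simps)
qed

lemma sum_U_nu:
  assumes "n > 1"
  shows "(\<Sum>j\<in>U n. nu n (real j)) = - real (card (U n)) / 2"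
proof -
  have "2 * (\<Sum>j\<in>U n. nu n (real j)) = (\<Sum>j\<in>U n. nu n (real j) + nu n (real (n - j)))"
    using sum_U_reflect[of "\<lambda>j. nu n (real j)" n] by (simp add: sum.distrib)
  also have "\<dots> = (\<Sum>j\<in>U n. - 1)"
    using assms by (intro sum.cong) (auto simp: U_def nu_reflect simp del: of_nat_diff)
  finally show ?thesis by simp
qed

lemma sawtooth_div_mem_U:
  assumes "j \<in> U n"
  shows "sawtooth (real j / real n) = real j / real n - 1/2"
proof -
  have "n > 0" "\<not> n dvd j" using assms by (auto simp: U_def dest: nat_dvd_not_less)
  moreover have "frac (real j / real n) = real j / real n" using assms by (simp add: U_def)
  ultimately show ?thesis using assms by (simp add: sawtooth_eq_frac of_nat_div_of_nat_in_Ints_iff)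
qed

lemma sum_moebius_dedekind_sums:
  assumes "n > 1"
  shows "(\<Sum>d1 | d1 dvd n. \<Sum>d2 | d2 dvd n.
      real_of_int (moebius_mu d1 * moebius_mu d2) * dedekind_sum (n div d1) (n div d2)) =
    (\<Sum>j\<in>U n. (nu n (real j) + 1/2) * (real j / real n - 1/2))"
proof -
  let ?M = "\<lambda>d. real_of_int (moebius_mu d)"
  let ?s1 = "\<lambda>j d1. ?M d1 * sawtooth (real j / real d1)"
  let ?s2 = "\<lambda>j d2. if d2 dvd j then ?M d2 else 0"
  let ?sn = "\<lambda>j. sawtooth (real j / real n)"
  let ?D = "{d. d dvd n}"
  have "(\<Sum>d1\<in>?D. \<Sum>d2\<in>?D. ?M d1 * ?M d2 * dedekind_sum (n div d1) (n div d2))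
      = (\<Sum>d1\<in>?D. \<Sum>d2\<in>?D. \<Sum>j=1..n. ?s1 j d1 * ?s2 j d2 * ?sn j)"
    using assms by (intro sum.cong refl)
      (auto simp: dedekind_sum_divisors_eq_sum_multiples sum_distrib_left intro!: sum.cong)
  also have "\<dots> = (\<Sum>j=1..n. \<Sum>d1\<in>?D. \<Sum>d2\<in>?D. ?s1 j d1 * ?s2 j d2 * ?sn j)"
    by (subst sum.swap, subst (2) sum.swap) (rule refl)
  also have "\<dots> = (\<Sum>j=1..n. (\<Sum>d1\<in>?D. ?s1 j d1) * (\<Sum>d2\<in>?D. ?s2 j d2) * ?sn j)"
    by (intro sum.cong refl) (subst sum_product, simp only: sum_distrib_right)
  also have "\<dots> = (\<Sum>j=1..n. if coprime j n then (\<Sum>d1\<in>?D. ?s1 j d1) * ?sn j else 0)"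
    using assms by (intro sum.cong refl) (simp add: sum_moebius_mu_dvd_indicator)
  also have "\<dots> = (\<Sum>j\<in>U n. (\<Sum>d1\<in>?D. ?s1 j d1) * ?sn j)"
  proof -
    have "U n = {j \<in> {1..n}. coprime j n}"
      using assms by (auto simp: U_eq_totatives totatives_def)
    then show ?thesis by (simp only:) (rule sum.inter_filter[symmetric], simp)
  qed
  also have "\<dots> = (\<Sum>j\<in>U n. (nu n (real j) + 1/2) * (real j / real n - 1/2))"
    using assms by (intro sum.cong refl) (auto simp: sum_moebius_sawtooth sawtooth_div_mem_U U_def)
  finally show ?thesis by simp
qed

theorem mainTheorem10:
  fixes n :: nat
  assumes "n > 1"
  shows "(\<Sum>a\<in>U n. nu n (real a) * real a) =
    - (real n * real (totient n)) / 4
    + real n * (\<Sum>d1 | d1 dvd n. \<Sum>d2 | d2 dvd n.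
        real_of_int (moebius_mu d1 * moebius_mu d2) * dedekind_sum (n div d1) (n div d2))"
proof -
  have expand: "real n * ((nu n (real j) + 1/2) * (real j / real n - 1/2)) =
      nu n (real j) * real j - real n / 2 * nu n (real j) + real j / 2 - real n / 4" for j
    using assms by (simp add: field_simps)
  have "real n * (\<Sum>j\<in>U n. (nu n (real j) + 1/2) * (real j / real n - 1/2)) =
      (\<Sum>j\<in>U n. nu n (real j) * real j - real n / 2 * nu n (real j) + real j / 2 - real n / 4)"
    unfolding sum_distrib_left expand ..
  also have "\<dots> = (\<Sum>j\<in>U n. nu n (real j) * real j) - real n / 2 * (\<Sum>j\<in>U n. nu n (real j))
      + (\<Sum>j\<in>U n. real j) / 2 - real n / 4 * real (card (U n))"
    by (simp add: sum.distrib sum_subtractf sum_distrib_left sum_divide_distrib)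
  also have "\<dots> = (\<Sum>j\<in>U n. nu n (real j) * real j) + real n * real (totient n) / 4"
    using assms by (simp add: sum_U_nu sum_U_of_nat card_U_eq_totient)
  finally show ?thesis using sum_moebius_dedekind_sums[OF assms] by simp
qed

end
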